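(* (i) $\mathrm{tr}(t_1u)$ is a highest weight vector in the $\mathrm{GL}_3(K)$-module $C_2$ generating a submodule isomorphic to $W_3(1)$. (ii) $\mathrm{tr}(t_1t_2u)$ is a highest weight vector in $C_2$ generating a submodule isomorphic to $W_3(1,1)$. (iii) $\mathrm{tr}(t_1^2s)$ is a highest weight vector in the $\mathrm{GL}_3(K)$-module $C_3$ generating a submodule isomorphic to $W_3(2)$. (iv) $\mathrm{tr}([t_1^2,t_2]s)$ is a highest weight vector in $C_3$ generating a submodule isomorphic to $W_3(2,1)$.
   Context: $K$ is a field of characteristic $0$; $so_3(K)$ is the space of $3\times 3$ skew-symmetric matrices. $T_3=\{t^{(k)}_{ij}\mid1\le i<j\le3,\ k=1,2,3\}$ are commuting indeterminates, $t_k$ the generic skew-symmetric matrix with $(i,j)$ entry $t^{(k)}_{ij}$, $(j,i)$ entry $-t^{(k)}_{ij}$ ($i<j$). $Z=\{z_{ij}\mid 1\le i,j\le 3\}$ are further indeterminates, $K[T_3,Z]$ the coordinate ring of $so_3(K)^{\oplus 3}\oplus M_3(K)$ with $\mathrm{SO}_3(K)$ acting by simultaneous conjugation. Let $u_{ij}=\frac12(z_{ij}-z_{ji})$ ($i<j$), $s_{ij}=\frac12(z_{ij}+z_{ji})$ ($i\le j$), $s_{kk}=z_{kk}-\frac13(z_{11}+z_{22}+z_{33})$; $u$ is the skew-symmetric matrix with entries $u_{ij}$ above the diagonal, $s$ the symmetric trace-zero matrix with entries $s_{ij}$ on and above the diagonal. $C_2$ (resp. $C_3$) is the space of $\mathrm{SO}_3(K)$-invariant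 polynomials in $K[T_3][u_{ij}]$ (resp. $K[T_3][s_{ij}]$) of total degree one in the $u_{ij}$ (resp. $s_{ij}$). $\mathrm{GL}_3(K)$ acts by $g\cdot t^{(k)}_{ij}=\sum_l g_{lk}t^{(l)}_{ij}$, fixing the $z_{ij}$. A highest weight vector of weight $\lambda$ is a nonzero element multihomogeneous of degree $\lambda$ in the entries of $(t_1,t_2,t_3)$ and fixed by the unipotent upper triangular matrices. $W_3(\lambda)$ is the irreducible polynomial $\mathrm{GL}_3(K)$-module indexed by $\lambda$; $[a,b]=ab-ba$. *)

theory Defs
  imports Main
begin

text \<open>Points of so_3(K)^3 (+) M_3(K) are given by raw coordinates:
  T k i j = t^(k)_ij (meaningful for k in {1,2,3}, 1 <= i < j <= 3) and Z i j = z_ij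
  (1 <= i,j <= 3).  Elements of K[T_3,Z] are modelled as polynomial functions of these
  coordinates (faithful since K has characteristic 0, hence is infinite).\<close>

type_synonym 'k tcoords = "nat \<Rightarrow> nat \<Rightarrow> nat \<Rightarrow> 'k"
type_synonym 'k zcoords = "nat \<Rightarrow> nat \<Rightarrow> 'k"
type_synonym 'k fn = "'k tcoords \<Rightarrow> 'k zcoords \<Rightarrow> 'k"

inductive_set polyT :: "('k::comm_ring_1 tcoords \<Rightarrow> 'k) set" where
  const: "(\<lambda>T. c) \<in> polyT"
| tvar: "k \<in> {1..3} \<Longrightarrow> 1 \<le> i \<Longrightarrow> i < j \<Longrightarrow> j \<le> 3 \<Longrightarrow> (\<lambda>T. T k i j) \<in> polyT"
| add: "p \<in> polyT \<Longrightarrow> q \<in> polyT \<Longrightarrow> (\<lambda>T. p T + q T) \<in> polyT"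
| mult: "p \<in> polyT \<Longrightarrow> q \<in> polyT \<Longrightarrow> (\<lambda>T. p T * q T) \<in> polyT"

definition mm :: "(nat \<Rightarrow> nat \<Rightarrow> 'k::comm_ring_1) \<Rightarrow> (nat \<Rightarrow> nat \<Rightarrow> 'k) \<Rightarrow> nat \<Rightarrow> nat \<Rightarrow> 'k" where
  "mm A B i j = (\<Sum>l = 1..3. A i l * B l j)"

definition msub :: "(nat \<Rightarrow> nat \<Rightarrow> 'k::comm_ring_1) \<Rightarrow> (nat \<Rightarrow> nat \<Rightarrow> 'k) \<Rightarrow> nat \<Rightarrow> nat \<Rightarrow> 'k" where
  "msub A B i j = A i j - B i j"

definition mcomm :: "(nat \<Rightarrow> nat \<Rightarrow> 'k::comm_ring_1) \<Rightarrow> (nat \<Rightarrow> nat \<Rightarrow> 'k) \<Rightarrow> nat \<Rightarrow> nat \<Rightarrow> 'k" where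
  "mcomm A B = msub (mm A B) (mm B A)"

definition mtr :: "(nat \<Rightarrow> nat \<Rightarrow> 'k::comm_ring_1) \<Rightarrow> 'k" where
  "mtr A = (\<Sum>i = 1..3. A i i)"

definition det3 :: "(nat \<Rightarrow> nat \<Rightarrow> 'k::comm_ring_1) \<Rightarrow> 'k" where
  "det3 g = g 1 1 * (g 2 2 * g 3 3 - g 2 3 * g 3 2)
          - g 1 2 * (g 2 1 * g 3 3 - g 2 3 * g 3 1)
          + g 1 3 * (g 2 1 * g 3 2 - g 2 2 * g 3 1)"

definition tmat :: "'k::comm_ring_1 tcoords \<Rightarrow> nat \<Rightarrow> nat \<Rightarrow> nat \<Rightarrow> 'k" where
  "tmat T k i j = (if i < j then T k i j else if j < i then - T k j i else 0)"

definition umat :: "'k::field_char_0 zcoords \<Rightarrow> nat \<Rightarrow> nat \<Rightarrow> 'k" where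
  "umat Z i j = (if i < j then (Z i j - Z j i) / 2
                 else if j < i then - ((Z j i - Z i j) / 2) else 0)"

definition smat :: "'k::field_char_0 zcoords \<Rightarrow> nat \<Rightarrow> nat \<Rightarrow> 'k" where
  "smat Z i j = (if i = j then Z i i - (Z 1 1 + Z 2 2 + Z 3 3) / 3
                 else if i < j then (Z i j + Z j i) / 2 else (Z j i + Z i j) / 2)"

text \<open>SO_3(K) and its action by simultaneous conjugation (g^{-1} = g^T).\<close>
definition SO3 :: "(nat \<Rightarrow> nat \<Rightarrow> 'k::comm_ring_1) \<Rightarrow> bool" where
  "SO3 g \<longleftrightarrow> (\<forall>i\<in>{1..3}. \<forall>j\<in>{1..3}. (\<Sum>l = 1..3. g i l * g j l) = (if i = j then 1 else 0))
             \<and> det3 g = 1"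

definition conj :: "(nat \<Rightarrow> nat \<Rightarrow> 'k::comm_ring_1) \<Rightarrow> (nat \<Rightarrow> nat \<Rightarrow> 'k) \<Rightarrow> nat \<Rightarrow> nat \<Rightarrow> 'k" where
  "conj g M i j = (\<Sum>a = 1..3. \<Sum>b = 1..3. g i a * M a b * g j b)"

definition SO3_invariant :: "'k::comm_ring_1 fn \<Rightarrow> bool" where
  "SO3_invariant f \<longleftrightarrow> (\<forall>g. SO3 g \<longrightarrow>
      (\<forall>T Z. f (\<lambda>k i j. conj g (tmat T k) i j) (conj g Z) = f T Z))"

definition in_C2 :: "'k::field_char_0 fn \<Rightarrow> bool" where
  "in_C2 f \<longleftrightarrow> (\<exists>p. (\<forall>i j. p i j \<in> polyT) \<and>
       (\<forall>T Z. f T Z = (\<Sum>i = 1..3. \<Sum>j = i+1..3. p i j T * umat Z i j)))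
     \<and> SO3_invariant f"

definition in_C3 :: "'k::field_char_0 fn \<Rightarrow> bool" where
  "in_C3 f \<longleftrightarrow> (\<exists>p. (\<forall>i j. p i j \<in> polyT) \<and>
       (\<forall>T Z. f T Z = (\<Sum>i = 1..3. \<Sum>j = i..3. p i j T * smat Z i j)))
     \<and> SO3_invariant f"

definition GL3 :: "(nat \<Rightarrow> nat \<Rightarrow> 'k::comm_ring_1) \<Rightarrow> bool" where
  "GL3 g \<longleftrightarrow> det3 g \<noteq> 0"

definition gl_act :: "(nat \<Rightarrow> nat \<Rightarrow> 'k::comm_ring_1) \<Rightarrow> 'k fn \<Rightarrow> 'k fn" where
  "gl_act g f = (\<lambda>T Z. f (\<lambda>k i j. \<Sum>l = 1..3. g l k * T l i j) Z)"

definition unipotent_upper :: "(nat \<Rightarrow> nat \<Rightarrow> 'k::comm_ring_1) \<Rightarrow> bool" where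
  "unipotent_upper g \<longleftrightarrow> (\<forall>i\<in>{1..3}. g i i = 1) \<and>
      (\<forall>i\<in>{1..3}. \<forall>j\<in>{1..3}. j < i \<longrightarrow> g i j = 0)"

definition multihom :: "'k::comm_ring_1 fn \<Rightarrow> (nat \<Rightarrow> nat) \<Rightarrow> bool" where
  "multihom f lam \<longleftrightarrow> (\<forall>c T Z. f (\<lambda>k i j. c k * T k i j) Z = (\<Prod>k = 1..3. c k ^ lam k) * f T Z)"

definition hwv :: "'k::comm_ring_1 fn \<Rightarrow> (nat \<Rightarrow> nat) \<Rightarrow> bool" where
  "hwv f lam \<longleftrightarrow> f \<noteq> (\<lambda>T Z. 0) \<and> multihom f lam \<and>
      (\<forall>g. unipotent_upper g \<longrightarrow> gl_act g f = f)"

inductive_set gl_cyclic :: "'k::comm_ring_1 fn \<Rightarrow> 'k fn set" for f where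
  gen: "GL3 g \<Longrightarrow> gl_act g f \<in> gl_cyclic f"
| zero: "(\<lambda>T Z. 0) \<in> gl_cyclic f"
| add: "h1 \<in> gl_cyclic f \<Longrightarrow> h2 \<in> gl_cyclic f \<Longrightarrow> (\<lambda>T Z. h1 T Z + h2 T Z) \<in> gl_cyclic f"
| smult: "h \<in> gl_cyclic f \<Longrightarrow> (\<lambda>T Z. c * h T Z) \<in> gl_cyclic f"

definition gl_submodule :: "'k::comm_ring_1 fn set \<Rightarrow> bool" where
  "gl_submodule V \<longleftrightarrow> (\<lambda>T Z. 0) \<in> V
     \<and> (\<forall>h1\<in>V. \<forall>h2\<in>V. (\<lambda>T Z. h1 T Z + h2 T Z) \<in> V)
     \<and> (\<forall>c. \<forall>h\<in>V. (\<lambda>T Z. c * h T Z) \<in> V)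
     \<and> (\<forall>g. GL3 g \<longrightarrow> (\<forall>h\<in>V. gl_act g h \<in> V))"

definition gl_irreducible :: "'k::comm_ring_1 fn set \<Rightarrow> bool" where
  "gl_irreducible M \<longleftrightarrow> M \<noteq> {\<lambda>T Z. 0} \<and>
     (\<forall>V. V \<subseteq> M \<longrightarrow> gl_submodule V \<longrightarrow> V \<noteq> {\<lambda>T Z. 0} \<longrightarrow> V = M)"

definition wt :: "nat \<Rightarrow> nat \<Rightarrow> nat \<Rightarrow> nat \<Rightarrow> nat" where
  "wt a b c k = (if k = 1 then a else if k = 2 then b else if k = 3 then c else 0)"

text \<open>f is a highest weight vector of weight lam generating a submodule isomorphic to
  W_3(lam): the cyclic submodule is irreducible and f is a highest weight vector of weight lam
  in it (irreducible polynomial GL_3-modules are classified by their highest weight).\<close>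
definition generates_W3 :: "'k::comm_ring_1 fn \<Rightarrow> (nat \<Rightarrow> nat) \<Rightarrow> bool" where
  "generates_W3 f lam \<longleftrightarrow> hwv f lam \<and> gl_irreducible (gl_cyclic f)"

end

theory Submission
  imports Defs
begin

text \<open>Each of the four polynomials is a multiple of one member B_l of a family of trace
  polynomials indexed by multi-indices l \<in> {1,2,3}^d (d = 1, 2, 2, 3) that is covariant: the
  substitution t_k \<mapsto> \<Sum>_l g_lk t_l transforms B_l by the d-th tensor power of g. So the cyclic
  GL_3-module lies in the span of the B_l, and GL_3 acts there on coefficient vectors. These
  coefficients are cubic polynomials in g, so by Lagrange interpolation along g + cI
  (c = 2, 3, 4, 5) every submodule is stable under singular g as well; applying suitable
  matrices of rank at most two to a nonzero element of a submodule, and using the linear relations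
  among the B_l, produces a nonzero multiple of the given polynomial, which proves
  irreducibility. The highest weight properties follow from the same covariance formula, and
  membership in C_2, C_3 from the invariance of traces under orthogonal conjugation.\<close>

lemma atLeastAtMost_1_3: "{1..3::nat} = {1, 2, 3}"
  by auto

lemma sum_1_3: "(\<Sum>i = 1..3. f i) = f 1 + f 2 + f (3::nat)"
  unfolding atLeastAtMost_1_3 by (simp add: add.assoc)

lemma prod_1_3: "(\<Prod>i = 1..3. f i) = f 1 * f 2 * f (3::nat)"
  unfolding atLeastAtMost_1_3 by (simp add: mult.assoc)

lemma sum_pairs: "(\<Sum>x\<in>A \<times> B. f x) = (\<Sum>a\<in>A. \<Sum>b\<in>B. f (a, b))"
  by (simp add: sum.cartesian_product)

lemma sum_reverse3: "(\<Sum>a\<in>A. \<Sum>b\<in>B. \<Sum>c\<in>C. f a b c) = (\<Sum>c\<in>C. \<Sum>b\<in>B. \<Sum>a\<in>A. f a b c)"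
proof -
  have "(\<Sum>a\<in>A. \<Sum>b\<in>B. \<Sum>c\<in>C. f a b c) = (\<Sum>a\<in>A. \<Sum>c\<in>C. \<Sum>b\<in>B. f a b c)"
    by (simp add: sum.swap[of _ B])
  also have "\<dots> = (\<Sum>c\<in>C. \<Sum>a\<in>A. \<Sum>b\<in>B. f a b c)"
    by (rule sum.swap)
  also have "\<dots> = (\<Sum>c\<in>C. \<Sum>b\<in>B. \<Sum>a\<in>A. f a b c)"
    by (simp add: sum.swap[of _ A])
  finally show ?thesis .
qed

lemma sum_upper_triangle: "(\<Sum>i = 1..3. \<Sum>j = i + 1..3. f i j) = f 1 2 + f 1 3 + f 2 (3::nat)"
  unfolding sum_1_3 by (simp add: eval_nat_numeral atLeastAtMostSuc_conv add_ac)

lemma sum_upper_triangle_diag: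
  "(\<Sum>i = 1..3. \<Sum>j = i..3. f i j) = f 1 1 + f 1 2 + f 1 3 + f 2 2 + f 2 3 + f 3 (3::nat)"
  unfolding sum_1_3 by (simp add: eval_nat_numeral atLeastAtMostSuc_conv add_ac)

definition mone :: "nat \<Rightarrow> nat \<Rightarrow> 'k::comm_ring_1" where
  "mone i j = (if i = j then 1 else 0)"

definition mshift :: "(nat \<Rightarrow> nat \<Rightarrow> 'k::comm_ring_1) \<Rightarrow> 'k \<Rightarrow> nat \<Rightarrow> nat \<Rightarrow> 'k" where
  "mshift E c i j = E i j + c * mone i j"

definition mlincomb :: "(nat \<Rightarrow> 'k::comm_ring_1) \<Rightarrow> (nat \<Rightarrow> nat \<Rightarrow> nat \<Rightarrow> 'k) \<Rightarrow> nat \<Rightarrow> nat \<Rightarrow> 'k" where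
  "mlincomb a X i j = (\<Sum>p = 1..3. a p * X p i j)"

lemma mm_mlincomb_left: "mm (mlincomb a X) B = mlincomb a (\<lambda>p. mm (X p) B)"
  by (intro ext) (simp add: mm_def mlincomb_def sum_distrib_left sum_distrib_right mult.assoc, rule sum.swap)

lemma mm_mlincomb_right: "mm A (mlincomb a X) = mlincomb a (\<lambda>p. mm A (X p))"
  by (intro ext) (simp add: mm_def mlincomb_def sum_distrib_left mult.left_commute, rule sum.swap)

lemma msub_mlincomb: "msub (mlincomb a X) (mlincomb a Y) = mlincomb a (\<lambda>p. msub (X p) (Y p))"
  by (intro ext) (simp add: msub_def mlincomb_def right_diff_distrib sum_subtractf)

lemma mcomm_mlincomb_left: "mcomm (mlincomb a X) B = mlincomb a (\<lambda>p. mcomm (X p) B)"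
  by (simp add: mcomm_def mm_mlincomb_left mm_mlincomb_right msub_mlincomb)

lemma mcomm_mlincomb_right: "mcomm A (mlincomb a X) = mlincomb a (\<lambda>p. mcomm A (X p))"
  by (simp add: mcomm_def mm_mlincomb_left mm_mlincomb_right msub_mlincomb)

lemma mtr_mlincomb: "mtr (mlincomb a X) = (\<Sum>p = 1..3. a p * mtr (X p))"
  by (simp add: mtr_def mlincomb_def sum_distrib_left, rule sum.swap)

lemma mm_assoc: "mm (mm A B) C = mm A (mm B C)"
  by (intro ext) (simp add: mm_def sum_distrib_left sum_distrib_right mult.assoc, rule sum.swap)

lemma mm_msub_left: "mm (msub A B) C = msub (mm A C) (mm B C)"
  by (intro ext) (simp add: mm_def msub_def left_diff_distrib sum_subtractf)

lemma mtr_msub: "mtr (msub A B) = mtr A - mtr B"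
  by (simp add: mtr_def msub_def sum_subtractf)

lemma mtr_mcomm_mm: "mtr (mm (mcomm A B) C) = mtr (mm A (mm B C)) - mtr (mm B (mm A C))"
  by (simp add: mcomm_def mm_msub_left mtr_msub mm_assoc)

lemma tmat_scale: "tmat (\<lambda>k i j. c k * T k i j) k = (\<lambda>i j. c k * tmat T k i j)"
  by (intro ext) (simp add: tmat_def)

lemma mm_scale_left: "mm (\<lambda>i j. a * A i j) B = (\<lambda>i j. a * mm A B i j)"
  by (intro ext) (simp add: mm_def sum_distrib_left mult.assoc)

lemma mm_scale_right: "mm A (\<lambda>i j. a * B i j) = (\<lambda>i j. a * mm A B i j)"
  by (intro ext) (simp add: mm_def sum_distrib_left mult.left_commute)

lemma mcomm_scale_left: "mcomm (\<lambda>i j. a * A i j) B = (\<lambda>i j. a * mcomm A B i j)"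
  by (intro ext) (simp add: mcomm_def msub_def mm_scale_left mm_scale_right algebra_simps)

lemma mcomm_scale_right: "mcomm A (\<lambda>i j. a * B i j) = (\<lambda>i j. a * mcomm A B i j)"
  by (intro ext) (simp add: mcomm_def msub_def mm_scale_left mm_scale_right algebra_simps)

lemma mtr_scale: "mtr (\<lambda>i j. a * A i j) = a * mtr A"
  by (simp add: mtr_def sum_distrib_left)

lemmas scale_simps =
  tmat_scale mm_scale_left mm_scale_right mcomm_scale_left mcomm_scale_right mtr_scale

text \<open>Through gl_act, rows12 sends every t_k into the span of t_1 and t_2.\<close>
definition rows12 :: "'k::comm_ring_1 \<Rightarrow> 'k \<Rightarrow> 'k \<Rightarrow> 'k \<Rightarrow> 'k \<Rightarrow> 'k \<Rightarrow> nat \<Rightarrow> nat \<Rightarrow> 'k" where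
  "rows12 x1 x2 x3 y1 y2 y3 i j =
     (if i = 1 then (if j = 1 then x1 else if j = 2 then x2 else if j = 3 then x3 else 0)
      else if i = 2 then (if j = 1 then y1 else if j = 2 then y2 else if j = 3 then y3 else 0)
      else 0)"

lemma GL3_mone: "GL3 mone"
  by (simp add: GL3_def det3_def mone_def)

lemma mshift_0: "mshift E 0 = E"
  by (intro ext) (simp add: mshift_def)

lemma GL3_mshift_rows12_iff:
  "GL3 (mshift (rows12 x1 x2 x3 y1 y2 y3) c) \<longleftrightarrow> c * ((x1 + c) * (y2 + c) - x2 * y1) \<noteq> 0"
  by (simp add: GL3_def det3_def mshift_def rows12_def mone_def algebra_simps)

definition gl_subst :: "(nat \<Rightarrow> nat \<Rightarrow> 'k::comm_ring_1) \<Rightarrow> 'k tcoords \<Rightarrow> 'k tcoords" where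
  "gl_subst g T k i j = (\<Sum>l = 1..3. g l k * T l i j)"

lemma gl_act_apply: "gl_act g f T Z = f (gl_subst g T) Z"
  by (simp add: gl_act_def gl_subst_def[abs_def])

lemma tmat_gl_subst: "tmat (gl_subst g T) k = mlincomb (\<lambda>l. g l k) (tmat T)"
  by (intro ext) (auto simp: tmat_def gl_subst_def mlincomb_def sum_negf[symmetric])

lemma unipotent_upper_entries:
  assumes "unipotent_upper g"
  shows "g 1 1 = 1" "g 2 2 = 1" "g 3 3 = 1" "g 2 1 = 0" "g 3 1 = 0" "g 3 2 = 0"
  using assms unfolding unipotent_upper_def by auto

lemma gl_submodule_smult: "gl_submodule V \<Longrightarrow> h \<in> V \<Longrightarrow> (\<lambda>T Z. c * h T Z) \<in> V"
  unfolding gl_submodule_def by blast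

lemma gl_submodule_add: "gl_submodule V \<Longrightarrow> h1 \<in> V \<Longrightarrow> h2 \<in> V \<Longrightarrow> (\<lambda>T Z. h1 T Z + h2 T Z) \<in> V"
  unfolding gl_submodule_def by blast

lemma gl_submodule_act: "gl_submodule V \<Longrightarrow> GL3 g \<Longrightarrow> h \<in> V \<Longrightarrow> gl_act g h \<in> V"
  unfolding gl_submodule_def by blast

lemma gl_submodule_lincomb:
  "gl_submodule V \<Longrightarrow> h1 \<in> V \<Longrightarrow> h2 \<in> V \<Longrightarrow> (\<lambda>T Z. a1 * h1 T Z + a2 * h2 T Z) \<in> V"
  by (intro gl_submodule_add gl_submodule_smult)

lemma gl_submodule_cancel_scalar:
  fixes V :: "'k::field fn set"
  assumes V: "gl_submodule V" and h: "h \<in> V" and h_eq: "\<And>T Z. h T Z = a * f T Z" and "a \<noteq> 0"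
  shows "f \<in> V"
proof -
  have "(\<lambda>T Z. inverse a * h T Z) \<in> V" using V h by (rule gl_submodule_smult)
  moreover have "(\<lambda>T Z. inverse a * h T Z) = f" using \<open>a \<noteq> 0\<close> by (simp add: h_eq field_simps)
  ultimately show ?thesis by simp
qed

lemma gl_cyclic_subset: assumes V: "gl_submodule V" and "f \<in> V" shows "gl_cyclic f \<subseteq> V"
proof
  fix h assume "h \<in> gl_cyclic f"
  then show "h \<in> V"
    by induction (use V \<open>f \<in> V\<close> in \<open>auto simp: gl_submodule_def\<close>)
qed

lemma gl_irreducible_gl_cyclicI:
  assumes "f \<noteq> (\<lambda>T Z. 0)" and "f \<in> gl_cyclic f"
    and reach: "\<And>V h. gl_submodule V \<Longrightarrow> V \<subseteq> gl_cyclic f \<Longrightarrow> h \<in> V \<Longrightarrow> h \<noteq> (\<lambda>T Z. 0) \<Longrightarrow> f \<in> V"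
  shows "gl_irreducible (gl_cyclic f)"
  unfolding gl_irreducible_def
proof (intro conjI allI impI)
  show "gl_cyclic f \<noteq> {\<lambda>T Z. 0}" using assms(1,2) by auto
next
  fix V assume "V \<subseteq> gl_cyclic f" "gl_submodule V" "V \<noteq> {\<lambda>T Z. 0}"
  moreover from \<open>gl_submodule V\<close> have "(\<lambda>T Z. 0) \<in> V" by (simp add: gl_submodule_def)
  ultimately obtain h where "h \<in> V" "h \<noteq> (\<lambda>T Z. 0)" by blast
  with reach \<open>gl_submodule V\<close> \<open>V \<subseteq> gl_cyclic f\<close> have "f \<in> V" by blast
  with \<open>gl_submodule V\<close> \<open>V \<subseteq> gl_cyclic f\<close> show "V = gl_cyclic f"
    using gl_cyclic_subset by blast
qed

definition cubic :: "('k::comm_ring_1 \<Rightarrow> 'k) \<Rightarrow> bool" where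
  "cubic \<phi> \<longleftrightarrow> (\<exists>a0 a1 a2 a3. \<forall>c. \<phi> c = a0 + a1 * c + a2 * c^2 + a3 * c^3)"

lemma cubic_interpolation:
  assumes "cubic \<phi>" shows "\<phi> 0 = 10 * \<phi> 2 - 20 * \<phi> 3 + 15 * \<phi> 4 - 4 * \<phi> 5"
  using assms unfolding cubic_def by (auto simp: algebra_simps power2_eq_square power3_eq_cube)

lemma cubic_product: "cubic (\<lambda>c. (x1 + c * y1) * (x2 + c * y2) * (x3 + c * y3))"
  unfolding cubic_def
  by (rule exI[of _ "x1 * x2 * x3"], rule exI[of _ "y1 * x2 * x3 + x1 * y2 * x3 + x1 * x2 * y3"],
      rule exI[of _ "y1 * y2 * x3 + y1 * x2 * y3 + x1 * y2 * y3"], rule exI[of _ "y1 * y2 * y3"])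
     (simp add: algebra_simps power2_eq_square power3_eq_cube)

section \<open>Covariant families\<close>

locale covariant_family =
  fixes I :: "'i set"
    and w :: "(nat \<Rightarrow> nat \<Rightarrow> 'k::field) \<Rightarrow> 'i \<Rightarrow> 'i \<Rightarrow> 'k"
    and B :: "'i \<Rightarrow> 'k fn"
  assumes finite_index: "finite I"
    and covariant: "l \<in> I \<Longrightarrow> B l (gl_subst g T) Z = (\<Sum>p\<in>I. w g p l * B p T Z)"
    and weight_mone: "p \<in> I \<Longrightarrow> l \<in> I \<Longrightarrow> w mone p l = (if p = l then 1 else 0)"
    and weight_cubic: "cubic (\<lambda>c. w (mshift E c) p l)"
begin

definition comb :: "('i \<Rightarrow> 'k) \<Rightarrow> 'k fn" where
  "comb b T Z = (\<Sum>l\<in>I. b l * B l T Z)"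

definition rho :: "(nat \<Rightarrow> nat \<Rightarrow> 'k) \<Rightarrow> ('i \<Rightarrow> 'k) \<Rightarrow> 'i \<Rightarrow> 'k" where
  "rho g b p = (\<Sum>l\<in>I. w g p l * b l)"

lemma gl_act_comb: "gl_act g (comb b) = comb (rho g b)"
proof (intro ext)
  fix T Z
  have "gl_act g (comb b) T Z = (\<Sum>l\<in>I. \<Sum>p\<in>I. b l * w g p l * B p T Z)"
    by (simp add: gl_act_apply comb_def covariant sum_distrib_left mult.assoc)
  also have "\<dots> = (\<Sum>p\<in>I. \<Sum>l\<in>I. b l * w g p l * B p T Z)"
    by (rule sum.swap)
  also have "\<dots> = comb (rho g b) T Z"
    by (simp add: comb_def rho_def sum_distrib_left sum_distrib_right ac_simps)
  finally show "gl_act g (comb b) T Z = comb (rho g b) T Z" .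
qed

lemma comb_cong: "(\<And>l. l \<in> I \<Longrightarrow> b l = b' l) \<Longrightarrow> comb b = comb b'"
  unfolding comb_def[abs_def] by simp

lemma comb_add: "comb (\<lambda>l. b1 l + b2 l) T Z = comb b1 T Z + comb b2 T Z"
  by (simp add: comb_def sum.distrib distrib_right)

lemma comb_smult: "comb (\<lambda>l. c * b l) T Z = c * comb b T Z"
  by (simp add: comb_def sum_distrib_left mult.assoc)

lemma comb_delta:
  assumes "l \<in> I" shows "comb (\<lambda>p. if p = l then c else 0) = (\<lambda>T Z. c * B l T Z)"
proof (intro ext)
  fix T Z
  have "comb (\<lambda>p. if p = l then c else 0) T Z = (\<Sum>p\<in>I. if p = l then c * B p T Z else 0)"
    unfolding comb_def by (rule sum.cong) simp_all
  then show "comb (\<lambda>p. if p = l then c else 0) T Z = c * B l T Z"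
    using finite_index assms by simp
qed

lemma comb_in_gl_cyclic: "comb b \<in> gl_cyclic (comb b)"
proof -
  have "rho mone b l = b l" if "l \<in> I" for l
  proof -
    have "rho mone b l = (\<Sum>l'\<in>I. if l = l' then b l' else 0)"
      unfolding rho_def by (rule sum.cong) (simp_all add: that weight_mone)
    then show ?thesis using that finite_index by simp
  qed
  then have "gl_act mone (comb b) = comb b"
    unfolding gl_act_comb by (rule comb_cong)
  then show ?thesis using gl_cyclic.gen[OF GL3_mone, of "comb b"] by simp
qed

lemma gl_cyclic_comb_subset: "gl_cyclic (comb e) \<subseteq> range comb"
proof
  fix h assume "h \<in> gl_cyclic (comb e)"
  then show "h \<in> range comb"
  proof induction
    case (gen g) show ?case by (simp add: gl_act_comb)
  next
    case zero
    have "comb (\<lambda>l. 0) = (\<lambda>T Z. 0)" by (simp add: comb_def[abs_def])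
    then show ?case by (metis rangeI)
  next
    case (add h1 h2)
    then obtain b1 b2 where "h1 = comb b1" "h2 = comb b2" by auto
    then have "(\<lambda>T Z. h1 T Z + h2 T Z) = comb (\<lambda>l. b1 l + b2 l)"
      by (intro ext) (simp add: comb_add)
    then show ?case by (metis rangeI)
  next
    case (smult h c)
    then obtain b where "h = comb b" by auto
    then have "(\<lambda>T Z. c * h T Z) = comb (\<lambda>l. c * b l)"
      by (intro ext) (simp add: comb_smult)
    then show ?case by (metis rangeI)
  qed
qed

text \<open>The weights of rho (E + cI) are cubic in c, so rho E is their Lagrange interpolation at
  c = 0 from c = 2, 3, 4, 5. Hence a submodule is stable under E even if E is singular.\<close>
lemma comb_rho_in_submodule:
  assumes V: "gl_submodule V" and b: "comb b \<in> V"
    and E: "\<forall>c\<in>{2, 3, 4, 5}. GL3 (mshift E c)"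
  shows "comb (rho E b) \<in> V"
proof -
  let ?h = "\<lambda>c. comb (rho (mshift E c) b)"
  have h: "?h c \<in> V" if "c \<in> {2, 3, 4, 5}" for c
    using gl_submodule_act[OF V bspec[OF E that] b] by (simp add: gl_act_comb)
  have w: "w E p l = 10 * w (mshift E 2) p l - 20 * w (mshift E 3) p l
      + 15 * w (mshift E 4) p l - 4 * w (mshift E 5) p l" for p l
    using cubic_interpolation[OF weight_cubic, of E p l] by (simp add: mshift_0)
  have "comb (rho E b) T Z = 10 * ?h 2 T Z - 20 * ?h 3 T Z + 15 * ?h 4 T Z - 4 * ?h 5 T Z" for T Z
    unfolding comb_def rho_def w
    by (simp add: left_diff_distrib distrib_right sum.distrib sum_subtractf sum_distrib_left
        sum_distrib_right mult.assoc)
  then have "comb (rho E b) = (\<lambda>T Z. 10 * ?h 2 T Z + (-20) * ?h 3 T Z + (15 * ?h 4 T Z + (-4) * ?h 5 T Z))"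
    by (intro ext) simp
  also have "\<dots> \<in> V"
    by (intro gl_submodule_add gl_submodule_lincomb V h) auto
  finally show ?thesis .
qed

lemma comb_reaches:
  assumes V: "gl_submodule V" and b: "comb b \<in> V" and E: "\<forall>c\<in>{2, 3, 4, 5}. GL3 (mshift E c)"
    and eq: "\<And>T Z. comb (rho E b) T Z = a * f T Z" and "a \<noteq> 0"
  shows "f \<in> V"
  using gl_submodule_cancel_scalar[OF V comb_rho_in_submodule[OF V b E] eq \<open>a \<noteq> 0\<close>] .

lemma generates_W3_comb:
  assumes f: "comb e = f" and "f \<noteq> (\<lambda>T Z. 0)" and "multihom f lam"
    and "\<And>g. unipotent_upper g \<Longrightarrow> gl_act g f = f"
    and reach: "\<And>V b. gl_submodule V \<Longrightarrow> comb b \<in> V \<Longrightarrow> comb b \<noteq> (\<lambda>T Z. 0) \<Longrightarrow> f \<in> V"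
  shows "generates_W3 f lam"
proof -
  have "gl_irreducible (gl_cyclic f)"
  proof (rule gl_irreducible_gl_cyclicI)
    show "f \<in> gl_cyclic f" using comb_in_gl_cyclic[of e] f by simp
  next
    fix V h assume "gl_submodule V" "V \<subseteq> gl_cyclic f" "h \<in> V" "h \<noteq> (\<lambda>T Z. 0)"
    moreover obtain b where "h = comb b"
      using gl_cyclic_comb_subset[of e] f \<open>V \<subseteq> gl_cyclic f\<close> \<open>h \<in> V\<close> by blast
    ultimately show "f \<in> V" using reach by blast
  qed fact
  with assms show ?thesis unfolding generates_W3_def hwv_def by blast
qed

end

section \<open>Three covariant families of trace polynomials\<close>

definition trace_t :: "nat \<Rightarrow> 'k::field_char_0 fn" where
  "trace_t l T Z = mtr (mm (tmat T l) (umat Z))"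

lemma trace_t_covariant: "trace_t l (gl_subst g T) Z = (\<Sum>p = 1..3. g p l * trace_t p T Z)"
  by (simp add: trace_t_def tmat_gl_subst mm_mlincomb_left mtr_mlincomb)

interpretation lin: covariant_family "{1..3}" "\<lambda>g. g" "trace_t :: _ \<Rightarrow> 'k::field_char_0 fn"
proof
  fix l :: nat and g T and Z :: "'k zcoords"
  show "trace_t l (gl_subst g T) Z = (\<Sum>p = 1..3. g p l * trace_t p T Z)"
    by (rule trace_t_covariant)
next
  fix E :: "nat \<Rightarrow> nat \<Rightarrow> 'k" and p l
  show "cubic (\<lambda>c. mshift E c p l)"
    using cubic_product[of "E p l" "mone p l" 1 0 1 0] by (simp add: mshift_def mult.commute)
qed (simp_all add: mone_def)

fun weight2 :: "(nat \<Rightarrow> nat \<Rightarrow> 'k::comm_ring_1) \<Rightarrow> nat \<times> nat \<Rightarrow> nat \<times> nat \<Rightarrow> 'k" where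
  "weight2 g (p, q) (l, m) = g p l * g q m"

fun trace_tt :: "('k zcoords \<Rightarrow> nat \<Rightarrow> nat \<Rightarrow> 'k) \<Rightarrow> nat \<times> nat \<Rightarrow> 'k::field_char_0 fn" where
  "trace_tt M (l, m) T Z = mtr (mm (mm (tmat T l) (tmat T m)) (M Z))"

lemma trace_tt_covariant:
  "trace_tt M (l, m) (gl_subst g T) Z
   = (\<Sum>pq\<in>{1..3} \<times> {1..3}. weight2 g pq (l, m) * trace_tt M pq T Z)"
  by (simp add: tmat_gl_subst mm_mlincomb_left mm_mlincomb_right mtr_mlincomb sum_pairs
      sum_distrib_left mult.assoc, subst sum.swap, simp add: mult.left_commute)

interpretation bil: covariant_family "{1..3} \<times> {1..3}" weight2 "trace_tt M :: _ \<Rightarrow> 'k::field_char_0 fn"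
  for M
proof
  fix l :: "nat \<times> nat" and g T and Z :: "'k zcoords"
  show "trace_tt M l (gl_subst g T) Z = (\<Sum>p\<in>{1..3} \<times> {1..3}. weight2 g p l * trace_tt M p T Z)"
    by (cases l) (simp only: trace_tt_covariant)
next
  fix p l :: "nat \<times> nat"
  show "weight2 mone p l = (if p = l then 1 else 0 :: 'k)"
    by (cases p; cases l) (simp add: mone_def)
next
  fix E p l
  show "cubic (\<lambda>c. weight2 (mshift E c) p l :: 'k)"
    using cubic_product[of "E (fst p) (fst l)" "mone (fst p) (fst l)" "E (snd p) (snd l)"
        "mone (snd p) (snd l)" 1 0]
    by (cases p; cases l) (simp add: mshift_def mult.commute)
qed simp

declare trace_tt.simps [simp del]

lemma trace_tt_umat_diag: "trace_tt umat (l, l) T Z = 0"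
  unfolding trace_tt.simps mtr_def mm_def sum_1_3 by (simp add: tmat_def umat_def field_simps)

lemma trace_tt_umat_swap: "trace_tt umat (m, l) T Z = - trace_tt umat (l, m) T Z"
  unfolding trace_tt.simps mtr_def mm_def sum_1_3 by (simp add: tmat_def umat_def field_simps)

lemma trace_tt_smat_swap: "trace_tt smat (m, l) T Z = trace_tt smat (l, m) T Z"
  unfolding trace_tt.simps mtr_def mm_def sum_1_3 by (simp add: tmat_def smat_def field_simps)

fun weight3 :: "(nat \<Rightarrow> nat \<Rightarrow> 'k::comm_ring_1) \<Rightarrow> nat \<times> nat \<times> nat \<Rightarrow> nat \<times> nat \<times> nat \<Rightarrow> 'k" where
  "weight3 g (p, q, r) (l, m, n) = g p l * g q m * g r n"

text \<open>The polarization of tr([t_1^2, t_2] s) in its first two arguments.\<close>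
fun trace_comm :: "nat \<times> nat \<times> nat \<Rightarrow> 'k::field_char_0 fn" where
  "trace_comm (l, m, n) T Z = mtr (mm (mcomm (mm (tmat T l) (tmat T m)) (tmat T n)) (smat Z))
     + mtr (mm (mcomm (mm (tmat T m) (tmat T l)) (tmat T n)) (smat Z))"

lemma mtr_mcomm_gl_subst:
  "mtr (mm (mcomm (mm (tmat (gl_subst g T) l) (tmat (gl_subst g T) m)) (tmat (gl_subst g T) n)) S)
   = (\<Sum>p = 1..3. \<Sum>q = 1..3. \<Sum>r = 1..3.
        g p l * g q m * g r n * mtr (mm (mcomm (mm (tmat T p) (tmat T q)) (tmat T r)) S))"
  by (simp add: tmat_gl_subst mm_mlincomb_left mm_mlincomb_right mcomm_mlincomb_left
      mcomm_mlincomb_right mtr_mlincomb sum_distrib_left mult.assoc, subst sum_reverse3, simp add: ac_simps)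

lemma trace_comm_covariant:
  "trace_comm (l, m, n) (gl_subst g T) Z
   = (\<Sum>pqr\<in>{1..3} \<times> {1..3} \<times> {1..3}. weight3 g pqr (l, m, n) * trace_comm pqr T Z)"
proof -
  let ?X = "\<lambda>p q r. mtr (mm (mcomm (mm (tmat T p) (tmat T q)) (tmat T r)) (smat Z))"
  have "(\<Sum>p = 1..3. \<Sum>q = 1..3. \<Sum>r = 1..3. g p m * g q l * g r n * ?X p q r)
      = (\<Sum>p = 1..3. \<Sum>q = 1..3. \<Sum>r = 1..3. g p l * g q m * g r n * ?X q p r)"
    by (subst sum.swap) (simp add: ac_simps)
  then show ?thesis
    by (simp add: mtr_mcomm_gl_subst sum_pairs distrib_left sum.distrib)
qed

interpretation comm: covariant_family "{1..3} \<times> {1..3} \<times> {1..3}" weight3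
  "trace_comm :: _ \<Rightarrow> 'k::field_char_0 fn"
proof
  fix l :: "nat \<times> nat \<times> nat" and g T and Z :: "'k zcoords"
  show "trace_comm l (gl_subst g T) Z
      = (\<Sum>p\<in>{1..3} \<times> {1..3} \<times> {1..3}. weight3 g p l * trace_comm p T Z)"
    by (cases l) (simp only: trace_comm_covariant)
next
  fix p l :: "nat \<times> nat \<times> nat"
  show "weight3 mone p l = (if p = l then 1 else 0 :: 'k)"
    by (cases p; cases l) (simp add: mone_def)
next
  fix E p l
  show "cubic (\<lambda>c. weight3 (mshift E c) p l :: 'k)"
    by (cases p; cases l) (simp add: mshift_def cubic_product)
qed simp

lemma trace_comm_swap: "trace_comm (m, l, n) T Z = trace_comm (l, m, n) T Z"
  by (simp add: add.commute)

lemma trace_comm_cyclic: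
  "trace_comm (l, m, n) T Z + trace_comm (m, n, l) T Z + trace_comm (n, l, m) T Z = 0"
  by (simp add: mtr_mcomm_mm mm_assoc)

declare trace_comm.simps [simp del]

lemma trace_comm_ppp: "trace_comm (p, p, p) T Z = 0"
  using trace_comm_cyclic[of p p p T Z] by simp

lemma trace_comm_pqp: "trace_comm (p, q, p) T Z = - trace_comm (p, p, q) T Z / 2"
proof -
  have "trace_comm (p, p, q) T Z + 2 * trace_comm (p, q, p) T Z = 0"
    using trace_comm_cyclic[of p q p T Z] trace_comm_swap[of q p p T Z] by (simp add: algebra_simps)
  then show ?thesis by (simp add: field_simps add_eq_0_iff)
qed

lemma trace_comm_qpp: "trace_comm (q, p, p) T Z = - trace_comm (p, p, q) T Z / 2"
  using trace_comm_pqp[of p q T Z] trace_comm_swap[of q p p T Z] by simp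

lemma trace_comm_231: "trace_comm (2, 3, 1) T Z = - trace_comm (1, 2, 3) T Z - trace_comm (1, 3, 2) T Z"
  using trace_comm_cyclic[of 1 2 3 T Z] trace_comm_swap[of 3 1 2 T Z] by algebra

section \<open>Reaching the highest weight vectors inside a submodule\<close>

lemma lin_comb_reaches_trace_t:
  fixes V :: "'k::field_char_0 fn set"
  assumes V: "gl_submodule V" and b: "lin.comb b \<in> V" and nonzero: "lin.comb b \<noteq> (\<lambda>T Z. 0)"
  shows "trace_t 1 \<in> V"
proof -
  have "lin.comb (lin.rho (rows12 1 0 0 0 0 0) b) T Z = b 1 * trace_t 1 T Z"
    and "lin.comb (lin.rho (rows12 0 1 0 0 0 0) b) T Z = b 2 * trace_t 1 T Z"
    and "lin.comb (lin.rho (rows12 0 0 1 0 0 0) b) T Z = b 3 * trace_t 1 T Z" for T Z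
    unfolding lin.comb_def lin.rho_def sum_1_3 by (simp_all add: rows12_def)
  note projections = this[THEN lin.comb_reaches[OF V b, rotated]]
  have "b 1 \<noteq> 0 \<or> b 2 \<noteq> 0 \<or> b 3 \<noteq> 0"
  proof (rule ccontr)
    assume "\<not> ?thesis"
    then have "lin.comb b = (\<lambda>T Z. 0)" by (intro ext) (simp only: lin.comb_def sum_1_3, simp)
    with nonzero show False ..
  qed
  then show ?thesis using projections by (auto simp: GL3_mshift_rows12_iff)
qed

lemma bil_umat_comb_reaches_trace_tt:
  fixes V :: "'k::field_char_0 fn set"
  assumes V: "gl_submodule V" and b: "bil.comb umat b \<in> V" and nonzero: "bil.comb umat b \<noteq> (\<lambda>T Z. 0)"
  shows "trace_tt umat (1, 2) \<in> V"
proof -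
  note relations = trace_tt_umat_diag trace_tt_umat_swap[of 2 1] trace_tt_umat_swap[of 3 1]
    trace_tt_umat_swap[of 3 2]
  have expansion: "bil.comb umat b T Z = (b (1, 2) - b (2, 1)) * trace_tt umat (1, 2) T Z
      + (b (1, 3) - b (3, 1)) * trace_tt umat (1, 3) T Z + (b (2, 3) - b (3, 2)) * trace_tt umat (2, 3) T Z"
    for b :: "nat \<times> nat \<Rightarrow> 'k" and T Z
    unfolding bil.comb_def sum_pairs sum_1_3 by (simp only: relations) (simp add: algebra_simps)
  have "bil.comb umat (bil.rho (rows12 1 0 0 0 1 0) b) T Z
        = (b (1, 2) - b (2, 1)) * trace_tt umat (1, 2) T Z"
    and "bil.comb umat (bil.rho (rows12 1 0 0 0 0 1) b) T Z
        = (b (1, 3) - b (3, 1)) * trace_tt umat (1, 2) T Z"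
    and "bil.comb umat (bil.rho (rows12 0 1 0 0 0 1) b) T Z
        = (b (2, 3) - b (3, 2)) * trace_tt umat (1, 2) T Z"
    for T Z
    unfolding expansion bil.rho_def sum_pairs sum_1_3 by (simp_all add: rows12_def)
  note projections = this[THEN bil.comb_reaches[OF V b, rotated]]
  have "b (1, 2) \<noteq> b (2, 1) \<or> b (1, 3) \<noteq> b (3, 1) \<or> b (2, 3) \<noteq> b (3, 2)"
  proof (rule ccontr)
    assume "\<not> ?thesis"
    then have "bil.comb umat b = (\<lambda>T Z. 0)" by (intro ext) (simp only: expansion, simp)
    with nonzero show False ..
  qed
  then show ?thesis using projections by (auto simp: GL3_mshift_rows12_iff)
qed

lemma bil_smat_comb_reaches_trace_tt:
  fixes V :: "'k::field_char_0 fn set"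
  assumes V: "gl_submodule V" and b: "bil.comb smat b \<in> V" and nonzero: "bil.comb smat b \<noteq> (\<lambda>T Z. 0)"
  shows "trace_tt smat (1, 1) \<in> V"
proof -
  note relations = trace_tt_smat_swap[of 2 1] trace_tt_smat_swap[of 3 1] trace_tt_smat_swap[of 3 2]
  have expansion: "bil.comb smat b T Z = b (1, 1) * trace_tt smat (1, 1) T Z
      + b (2, 2) * trace_tt smat (2, 2) T Z + b (3, 3) * trace_tt smat (3, 3) T Z
      + (b (1, 2) + b (2, 1)) * trace_tt smat (1, 2) T Z + (b (1, 3) + b (3, 1)) * trace_tt smat (1, 3) T Z
      + (b (2, 3) + b (3, 2)) * trace_tt smat (2, 3) T Z"
    for b :: "nat \<times> nat \<Rightarrow> 'k" and T Z
    unfolding bil.comb_def sum_pairs sum_1_3 by (simp only: relations) (simp add: algebra_simps)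
  have "bil.comb smat (bil.rho (rows12 1 0 0 0 0 0) b) T Z = b (1, 1) * trace_tt smat (1, 1) T Z"
    and "bil.comb smat (bil.rho (rows12 0 1 0 0 0 0) b) T Z = b (2, 2) * trace_tt smat (1, 1) T Z"
    and "bil.comb smat (bil.rho (rows12 0 0 1 0 0 0) b) T Z = b (3, 3) * trace_tt smat (1, 1) T Z"
    and "bil.comb smat (bil.rho (rows12 1 1 0 0 0 0) b) T Z
         = (b (1, 1) + b (2, 2) + (b (1, 2) + b (2, 1))) * trace_tt smat (1, 1) T Z"
    and "bil.comb smat (bil.rho (rows12 1 0 1 0 0 0) b) T Z
         = (b (1, 1) + b (3, 3) + (b (1, 3) + b (3, 1))) * trace_tt smat (1, 1) T Z"
    and "bil.comb smat (bil.rho (rows12 0 1 1 0 0 0) b) T Z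
         = (b (2, 2) + b (3, 3) + (b (2, 3) + b (3, 2))) * trace_tt smat (1, 1) T Z"
    for T Z
    unfolding expansion bil.rho_def sum_pairs sum_1_3 by (simp_all add: rows12_def algebra_simps)
  note projections = this[THEN bil.comb_reaches[OF V b, rotated]]
  show ?thesis
  proof (cases "b (1, 1) = 0 \<and> b (2, 2) = 0 \<and> b (3, 3) = 0")
    case False
    then show ?thesis using projections by (auto simp: GL3_mshift_rows12_iff)
  next
    case True
    have "b (1, 2) + b (2, 1) \<noteq> 0 \<or> b (1, 3) + b (3, 1) \<noteq> 0 \<or> b (2, 3) + b (3, 2) \<noteq> 0"
    proof (rule ccontr)
      assume "\<not> ?thesis"
      with True have "bil.comb smat b = (\<lambda>T Z. 0)" by (intro ext) (simp only: expansion, simp)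
      with nonzero show False ..
    qed
    then show ?thesis using True projections by (auto simp: GL3_mshift_rows12_iff)
  qed
qed

definition coeff_ppq :: "(nat \<times> nat \<times> nat \<Rightarrow> 'k::field_char_0) \<Rightarrow> nat \<Rightarrow> nat \<Rightarrow> 'k" where
  "coeff_ppq b p q = b (p, p, q) - b (p, q, p) / 2 - b (q, p, p) / 2"

definition coeff_123 :: "(nat \<times> nat \<times> nat \<Rightarrow> 'k::field_char_0) \<Rightarrow> 'k" where
  "coeff_123 b = b (1, 2, 3) + b (2, 1, 3) - b (2, 3, 1) - b (3, 2, 1)"

definition coeff_132 :: "(nat \<times> nat \<times> nat \<Rightarrow> 'k::field_char_0) \<Rightarrow> 'k" where
  "coeff_132 b = b (1, 3, 2) + b (3, 1, 2) - b (2, 3, 1) - b (3, 2, 1)"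

lemma comm_comb_expansion:
  "comm.comb b T Z =
     coeff_ppq b 1 2 * trace_comm (1, 1, 2) T Z + coeff_ppq b 1 3 * trace_comm (1, 1, 3) T Z
   + coeff_ppq b 2 1 * trace_comm (2, 2, 1) T Z + coeff_ppq b 2 3 * trace_comm (2, 2, 3) T Z
   + coeff_ppq b 3 1 * trace_comm (3, 3, 1) T Z + coeff_ppq b 3 2 * trace_comm (3, 3, 2) T Z
   + coeff_123 b * trace_comm (1, 2, 3) T Z + coeff_132 b * trace_comm (1, 3, 2) T Z"
proof -
  note relations = trace_comm_ppp trace_comm_pqp trace_comm_qpp trace_comm_231
    trace_comm_swap[of 3 2 1] trace_comm_swap[of 2 1 3] trace_comm_swap[of 3 1 2]
  show ?thesis
    unfolding comm.comb_def
    unfolding sum_pairs sum_1_3 coeff_ppq_def coeff_123_def coeff_132_def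
    by (simp only: relations) (simp add: field_simps)
qed

definition tr_comm_s :: "'k::field_char_0 fn" where
  "tr_comm_s T Z = mtr (mm (mcomm (mm (tmat T 1) (tmat T 1)) (tmat T 2)) (smat Z))"

lemma tr_comm_s_eq: "tr_comm_s T Z = trace_comm (1, 1, 2) T Z / 2"
  by (simp add: tr_comm_s_def trace_comm.simps)

text \<open>E2 is E1 with the first row doubled, so P E1 E2 cancels the component of weight (1, 2, 0)
  and keeps the one of weight (2, 1, 0).\<close>
lemma comm_projections:
  fixes b :: "nat \<times> nat \<times> nat \<Rightarrow> 'k::field_char_0"
  defines "P \<equiv> \<lambda>E1 E2 T Z. - 2 * comm.comb (comm.rho E1 b) T Z + comm.comb (comm.rho E2 b) T Z"
  shows "P (rows12 1 0 0 0 1 0) (rows12 2 0 0 0 1 0) T Z = 4 * coeff_ppq b 1 2 * tr_comm_s T Z"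
    and "P (rows12 1 0 0 0 0 1) (rows12 2 0 0 0 0 1) T Z = 4 * coeff_ppq b 1 3 * tr_comm_s T Z"
    and "P (rows12 0 1 0 1 0 0) (rows12 0 2 0 1 0 0) T Z = 4 * coeff_ppq b 2 1 * tr_comm_s T Z"
    and "P (rows12 0 1 0 0 0 1) (rows12 0 2 0 0 0 1) T Z = 4 * coeff_ppq b 2 3 * tr_comm_s T Z"
    and "P (rows12 0 0 1 1 0 0) (rows12 0 0 2 1 0 0) T Z = 4 * coeff_ppq b 3 1 * tr_comm_s T Z"
    and "P (rows12 0 0 1 0 1 0) (rows12 0 0 2 0 1 0) T Z = 4 * coeff_ppq b 3 2 * tr_comm_s T Z"
    and "P (rows12 1 1 0 0 0 1) (rows12 2 2 0 0 0 1) T Z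
         = 4 * (coeff_ppq b 1 3 + coeff_ppq b 2 3 + coeff_123 b - coeff_132 b / 2) * tr_comm_s T Z"
    and "P (rows12 1 0 1 0 1 0) (rows12 2 0 2 0 1 0) T Z
         = 4 * (coeff_ppq b 1 2 + coeff_ppq b 3 2 + coeff_132 b - coeff_123 b / 2) * tr_comm_s T Z"
  unfolding P_def comm_comb_expansion
  unfolding tr_comm_s_eq coeff_ppq_def coeff_123_def coeff_132_def comm.rho_def
  unfolding sum_pairs sum_1_3
  by (simp_all add: rows12_def field_simps)

lemma comm_comb_pair_reaches:
  fixes V :: "'k::field_char_0 fn set"
  assumes V: "gl_submodule V" and b: "comm.comb b \<in> V"
    and E: "\<forall>c\<in>{2, 3, 4, 5}. GL3 (mshift E1 c)" "\<forall>c\<in>{2, 3, 4, 5}. GL3 (mshift E2 c)"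
    and eq: "\<And>T Z. - 2 * comm.comb (comm.rho E1 b) T Z + comm.comb (comm.rho E2 b) T Z = a * f T Z"
    and "a \<noteq> 0"
  shows "f \<in> V"
proof (rule gl_submodule_cancel_scalar[OF V _ _ \<open>a \<noteq> 0\<close>])
  show "(\<lambda>T Z. - 2 * comm.comb (comm.rho E1 b) T Z + 1 * comm.comb (comm.rho E2 b) T Z) \<in> V"
    by (intro gl_submodule_lincomb V comm.comb_rho_in_submodule[OF V b] E)
qed (use eq in simp)

lemma comm_comb_reaches_tr_comm_s:
  fixes V :: "'k::field_char_0 fn set"
  assumes V: "gl_submodule V" and b: "comm.comb b \<in> V" and nonzero: "comm.comb b \<noteq> (\<lambda>T Z. 0)"
  shows "tr_comm_s \<in> V"
proof -
  note reach = comm_comb_pair_reaches[OF V b]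
  show ?thesis
  proof (cases "coeff_ppq b 1 2 = 0 \<and> coeff_ppq b 1 3 = 0 \<and> coeff_ppq b 2 1 = 0
      \<and> coeff_ppq b 2 3 = 0 \<and> coeff_ppq b 3 1 = 0 \<and> coeff_ppq b 3 2 = 0")
    case False
    then show ?thesis
      using reach[OF _ _ comm_projections(1)] reach[OF _ _ comm_projections(2)]
        reach[OF _ _ comm_projections(3)] reach[OF _ _ comm_projections(4)]
        reach[OF _ _ comm_projections(5)] reach[OF _ _ comm_projections(6)]
      by (auto simp: GL3_mshift_rows12_iff)
  next
    case True
    have "2 * coeff_123 b \<noteq> coeff_132 b \<or> 2 * coeff_132 b \<noteq> coeff_123 b"
    proof (rule ccontr)
      assume "\<not> ?thesis"
      then have "coeff_123 b = 2 * (2 * coeff_123 b)" "coeff_132 b = 2 * coeff_123 b"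
        by simp_all
      then have "coeff_123 b = 0" "coeff_132 b = 0"
        by simp_all
      with True have "comm.comb b = (\<lambda>T Z. 0)"
        by (intro ext) (simp only: comm_comb_expansion, simp)
      with nonzero show False ..
    qed
    then show ?thesis
      using True reach[OF _ _ comm_projections(7)] reach[OF _ _ comm_projections(8)]
      by (auto simp: GL3_mshift_rows12_iff)
  qed
qed

lemma trace_t_unipotent: "unipotent_upper g \<Longrightarrow> gl_act g (trace_t 1) = trace_t 1"
  using unipotent_upper_entries[of g]
  unfolding gl_act_apply[abs_def] trace_t_covariant sum_1_3 by simp

lemma trace_tt_umat_unipotent:
  "unipotent_upper g \<Longrightarrow> gl_act g (trace_tt umat (1, 2)) = trace_tt umat (1, 2)"
  using unipotent_upper_entries[of g]
  unfolding gl_act_apply[abs_def] trace_tt_covariant sum_pairs sum_1_3 by (simp add: trace_tt_umat_diag)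

lemma trace_tt_smat_unipotent:
  "unipotent_upper g \<Longrightarrow> gl_act g (trace_tt smat (1, 1)) = trace_tt smat (1, 1)"
  using unipotent_upper_entries[of g]
  unfolding gl_act_apply[abs_def] trace_tt_covariant sum_pairs sum_1_3 by simp

lemma tr_comm_s_unipotent: "unipotent_upper g \<Longrightarrow> gl_act g tr_comm_s = tr_comm_s"
  using unipotent_upper_entries[of g]
  unfolding gl_act_apply[abs_def] tr_comm_s_eq trace_comm_covariant sum_pairs sum_1_3
  by (simp add: trace_comm_ppp)

lemma multihom_trace_t: "multihom (trace_t 1) (wt 1 0 0)"
  unfolding multihom_def trace_t_def scale_simps prod_1_3 by (simp add: wt_def)

lemma multihom_trace_tt_umat: "multihom (trace_tt umat (1, 2)) (wt 1 1 0)"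
  unfolding multihom_def trace_tt.simps scale_simps prod_1_3 by (simp add: wt_def)

lemma multihom_trace_tt_smat: "multihom (trace_tt smat (1, 1)) (wt 2 0 0)"
  unfolding multihom_def trace_tt.simps scale_simps prod_1_3 by (simp add: wt_def power2_eq_square)

lemma multihom_tr_comm_s: "multihom tr_comm_s (wt 2 1 0)"
  unfolding multihom_def tr_comm_s_def scale_simps prod_1_3 by (simp add: wt_def power2_eq_square)

lemma trace_t_nonzero: "trace_t 1 \<noteq> (\<lambda>T Z. 0 :: 'k::field_char_0)"
proof -
  have "trace_t 1 (\<lambda>k i j. if k = 1 \<and> i = 1 \<and> j = 2 then 1 else 0) (\<lambda>i j. if i = 1 \<and> j = 2 then 1 else 0)
      = (- 1 :: 'k)"
    unfolding trace_t_def mtr_def mm_def sum_1_3 by (simp add: tmat_def umat_def)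
  then show ?thesis by (metis zero_neq_neg_one)
qed

lemma trace_tt_umat_nonzero: "trace_tt umat (1, 2) \<noteq> (\<lambda>T Z. 0 :: 'k::field_char_0)"
proof -
  have "trace_tt umat (1, 2) (\<lambda>k i j. if (k = 1 \<and> i = 1 \<and> j = 2) \<or> (k = 2 \<and> i = 2 \<and> j = 3) then 1 else 0)
      (\<lambda>i j. if i = 1 \<and> j = 3 then 1 else 0) = (- 1 / 2 :: 'k)"
    unfolding trace_tt.simps mtr_def mm_def sum_1_3 by (simp add: tmat_def umat_def)
  then show ?thesis by (metis divide_eq_0_iff zero_neq_neg_one zero_neq_numeral)
qed

lemma trace_tt_smat_nonzero: "trace_tt smat (1, 1) \<noteq> (\<lambda>T Z. 0 :: 'k::field_char_0)"
proof -
  have "trace_tt smat (1, 1) (\<lambda>k i j. if k = 1 \<and> i = 1 \<and> j = 2 then 1 else 0)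
      (\<lambda>i j. if i = 1 \<and> j = 1 then 1 else 0) = (- 1 / 3 :: 'k)"
    unfolding trace_tt.simps mtr_def mm_def sum_1_3 by (simp add: tmat_def smat_def)
  then show ?thesis by (metis divide_eq_0_iff zero_neq_neg_one zero_neq_numeral)
qed

lemma tr_comm_s_nonzero: "tr_comm_s \<noteq> (\<lambda>T Z. 0 :: 'k::field_char_0)"
proof -
  have "tr_comm_s (\<lambda>k i j. if (k = 1 \<and> i = 1 \<and> j = 2) \<or> (k = 2 \<and> i = 2 \<and> j = 3) then 1 else 0)
      (\<lambda>i j. if i = 2 \<and> j = 3 then 1 else 0) = (- 1 :: 'k)"
    unfolding tr_comm_s_def mtr_def mm_def mcomm_def msub_def sum_1_3 by (simp add: tmat_def smat_def)
  then show ?thesis by (metis zero_neq_neg_one)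
qed

section \<open>Invariance under orthogonal conjugation\<close>

lemma orthogonal_rows_imp_columns:
  fixes a b c d e f g h i :: "'k::field"
  assumes "a*a + b*b + c*c = 1" "d*d + e*e + f*f = 1" "g*g + h*h + i*i = 1"
    "a*d + b*e + c*f = 0" "a*g + b*h + c*i = 0" "d*g + e*h + f*i = 0"
    "a * (e * i - f * h) - b * (d * i - f * g) + c * (d * h - e * g) = 1"
  shows "a*a + d*d + g*g = 1" "b*b + e*e + h*h = 1" "c*c + f*f + i*i = 1"
    "a*b + d*e + g*h = 0" "a*c + d*f + g*i = 0" "b*c + e*f + h*i = 0"
  using assms by algebra+

lemma SO3_columns:
  fixes g :: "nat \<Rightarrow> nat \<Rightarrow> 'k::field"
  assumes "SO3 g" and "a \<in> {1..3}" "b \<in> {1..3}"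
  shows "(\<Sum>l = 1..3. g l a * g l b) = (if a = b then 1 else 0)"
proof -
  have "g 1 1 * g 1 1 + g 1 2 * g 1 2 + g 1 3 * g 1 3 = 1"
    "g 2 1 * g 2 1 + g 2 2 * g 2 2 + g 2 3 * g 2 3 = 1"
    "g 3 1 * g 3 1 + g 3 2 * g 3 2 + g 3 3 * g 3 3 = 1"
    "g 1 1 * g 2 1 + g 1 2 * g 2 2 + g 1 3 * g 2 3 = 0"
    "g 1 1 * g 3 1 + g 1 2 * g 3 2 + g 1 3 * g 3 3 = 0"
    "g 2 1 * g 3 1 + g 2 2 * g 3 2 + g 2 3 * g 3 3 = 0"
    "g 1 1 * (g 2 2 * g 3 3 - g 2 3 * g 3 2) - g 1 2 * (g 2 1 * g 3 3 - g 2 3 * g 3 1)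
       + g 1 3 * (g 2 1 * g 3 2 - g 2 2 * g 3 1) = 1"
    using \<open>SO3 g\<close> unfolding SO3_def det3_def sum_1_3 atLeastAtMost_1_3 by (simp_all add: add.assoc)
  note columns = orthogonal_rows_imp_columns[OF this]
  from \<open>a \<in> {1..3}\<close> \<open>b \<in> {1..3}\<close> have "a \<in> {1, 2, 3}" "b \<in> {1, 2, 3}" by auto
  then show ?thesis unfolding sum_1_3 using columns by (auto simp: algebra_simps)
qed

lemma conj_tmat_skew: "conj g (tmat T k) j i = - conj g (tmat T k) i j"
  unfolding conj_def sum_1_3 by (simp add: tmat_def algebra_simps)

lemma tmat_conj: "tmat (\<lambda>k i j. conj g (tmat T k) i j) k = conj g (tmat (T :: 'k::field_char_0 tcoords) k)"
proof (intro ext)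
  fix i j :: nat
  consider "i < j" | "j < i" | "i = j" by linarith
  then show "tmat (\<lambda>k i j. conj g (tmat T k) i j) k i j = conj g (tmat T k) i j"
  proof cases
    case 2
    then show ?thesis using conj_tmat_skew[of g T k j i] by (simp add: tmat_def)
  next
    case 3
    then show ?thesis using conj_tmat_skew[of g T k i i] by (simp add: tmat_def)
  qed (simp add: tmat_def)
qed

lemma umat_eq: "umat Z i j = (Z i j - Z j i) / 2"
  by (auto simp: umat_def field_simps)

lemma umat_conj: "umat (conj g Z) = conj g (umat Z)"
  by (intro ext) (simp only: umat_eq conj_def sum_1_3, simp add: field_simps)

lemma mm_conj:
  fixes g :: "nat \<Rightarrow> nat \<Rightarrow> 'k::field"
  assumes g: "SO3 g"
  shows "mm (conj g A) (conj g B) = conj g (mm A B)"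
proof (intro ext)
  fix i j
  have "mm (conj g A) (conj g B) i j = (\<Sum>a = 1..3. \<Sum>b = 1..3. \<Sum>c = 1..3. \<Sum>d = 1..3.
      g i a * A a b * (\<Sum>l = 1..3. g l b * g l c) * B c d * g j d)"
    unfolding mm_def conj_def sum_1_3 by (simp add: algebra_simps)
  also have "\<dots> = (\<Sum>a = 1..3. \<Sum>b = 1..3. \<Sum>c = 1..3. \<Sum>d = 1..3.
      g i a * A a b * (if b = c then 1 else 0) * B c d * g j d)"
    by (intro sum.cong refl) (simp only: SO3_columns[OF g])
  also have "\<dots> = conj g (mm A B) i j"
    unfolding mm_def conj_def sum_1_3 by (simp add: algebra_simps)
  finally show "mm (conj g A) (conj g B) i j = conj g (mm A B) i j" .
qed

lemma msub_conj: "msub (conj g A) (conj g B) = conj g (msub A B)"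
  by (intro ext) (simp add: conj_def msub_def sum_subtractf algebra_simps)

lemma mcomm_conj: "SO3 g \<Longrightarrow> mcomm (conj g A) (conj g B) = conj g (mcomm A (B :: nat \<Rightarrow> nat \<Rightarrow> 'k::field))"
  by (simp add: mcomm_def mm_conj msub_conj)

lemma mtr_conj:
  fixes g :: "nat \<Rightarrow> nat \<Rightarrow> 'k::field"
  assumes g: "SO3 g"
  shows "mtr (conj g M) = mtr M"
proof -
  have "mtr (conj g M) = (\<Sum>a = 1..3. \<Sum>b = 1..3. M a b * (\<Sum>i = 1..3. g i a * g i b))"
    unfolding mtr_def conj_def sum_1_3 by (simp add: algebra_simps)
  also have "\<dots> = (\<Sum>a = 1..3. \<Sum>b = 1..3. M a b * (if a = b then 1 else 0))"
    by (intro sum.cong refl) (simp only: SO3_columns[OF g])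
  also have "\<dots> = mtr M"
    unfolding mtr_def sum_1_3 by simp
  finally show ?thesis .
qed

lemma smat_eq: "smat Z i j = (Z i j + Z j i) / 2 - (if i = j then (Z 1 1 + Z 2 2 + Z 3 3) / 3 else 0)"
  by (auto simp: smat_def field_simps)

lemma smat_conj:
  fixes g :: "nat \<Rightarrow> nat \<Rightarrow> 'k::field_char_0"
  assumes g: "SO3 g" and ij: "i \<in> {1..3}" "j \<in> {1..3}"
  shows "smat (conj g Z) i j = conj g (smat Z) i j"
proof -
  let ?\<tau> = "Z 1 1 + Z 2 2 + Z 3 3"
  have "conj g Z 1 1 + conj g Z 2 2 + conj g Z 3 3 = ?\<tau>"
    using mtr_conj[OF g, of Z] unfolding mtr_def sum_1_3 .
  then have "smat (conj g Z) i j = (conj g Z i j + conj g Z j i) / 2 - (if i = j then ?\<tau> / 3 else 0)"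
    by (simp only: smat_eq)
  also have "(conj g Z i j + conj g Z j i) / 2 = conj g (\<lambda>a b. (Z a b + Z b a) / 2) i j"
    unfolding conj_def sum_1_3 by (simp add: field_simps)
  also have "(if i = j then ?\<tau> / 3 else 0) = ?\<tau> / 3 * (\<Sum>l = 1..3. g i l * g j l)"
    using g ij unfolding SO3_def by simp
  also have "conj g (\<lambda>a b. (Z a b + Z b a) / 2) i j - ?\<tau> / 3 * (\<Sum>l = 1..3. g i l * g j l)
      = conj g (smat Z) i j"
    unfolding conj_def smat_eq sum_1_3 by (simp add: field_simps)
  finally show ?thesis .
qed

lemma mtr_mm_conj_umat: "SO3 g \<Longrightarrow> mtr (mm (conj g X) (umat (conj g Z))) = mtr (mm X (umat Z))"
  by (simp add: umat_conj mm_conj mtr_conj)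

lemma mtr_mm_conj_smat:
  assumes g: "SO3 (g :: nat \<Rightarrow> nat \<Rightarrow> 'k::field_char_0)"
  shows "mtr (mm (conj g X) (smat (conj g Z))) = mtr (mm X (smat Z))"
proof -
  have "mtr (mm (conj g X) (smat (conj g Z))) = mtr (mm (conj g X) (conj g (smat Z)))"
    unfolding mtr_def mm_def by (intro sum.cong refl) (simp add: smat_conj[OF g])
  then show ?thesis by (simp add: mm_conj[OF g] mtr_conj[OF g])
qed

lemma SO3_invariant_trace_t: "SO3_invariant (trace_t 1 :: 'k::field_char_0 fn)"
  unfolding SO3_invariant_def trace_t_def tmat_conj by (simp add: mtr_mm_conj_umat)

lemma SO3_invariant_trace_tt_umat: "SO3_invariant (trace_tt umat (1, 2) :: 'k::field_char_0 fn)"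
  unfolding SO3_invariant_def trace_tt.simps tmat_conj by (simp add: mm_conj mtr_mm_conj_umat)

lemma SO3_invariant_trace_tt_smat: "SO3_invariant (trace_tt smat (1, 1) :: 'k::field_char_0 fn)"
  unfolding SO3_invariant_def trace_tt.simps tmat_conj by (simp add: mm_conj mtr_mm_conj_smat)

lemma SO3_invariant_tr_comm_s: "SO3_invariant (tr_comm_s :: 'k::field_char_0 fn)"
  unfolding SO3_invariant_def tr_comm_s_def tmat_conj by (simp add: mm_conj mcomm_conj mtr_mm_conj_smat)

lemma polyT_uminus: "p \<in> polyT \<Longrightarrow> (\<lambda>T. - p T) \<in> polyT"
  using polyT.mult[OF polyT.const[of "- 1"]] by simp

lemma polyT_diff: "p \<in> polyT \<Longrightarrow> q \<in> polyT \<Longrightarrow> (\<lambda>T. p T - q T) \<in> polyT"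
  using polyT.add[OF _ polyT_uminus] by simp

definition poly_matrix :: "('k::comm_ring_1 tcoords \<Rightarrow> nat \<Rightarrow> nat \<Rightarrow> 'k) \<Rightarrow> bool" where
  "poly_matrix X \<longleftrightarrow> (\<forall>i\<in>{1..3}. \<forall>j\<in>{1..3}. (\<lambda>T. X T i j) \<in> polyT)"

lemma poly_matrix_tmat: assumes "k \<in> {1..3}" shows "poly_matrix (\<lambda>T. tmat T k)"
  unfolding poly_matrix_def
proof (intro ballI)
  fix i j :: nat assume "i \<in> {1..3}" "j \<in> {1..3}"
  consider "i < j" | "j < i" | "i = j" by linarith
  then show "(\<lambda>T. tmat T k i j) \<in> polyT"
  proof cases
    case 1
    with assms \<open>i \<in> _\<close> \<open>j \<in> _\<close> show ?thesis by (simp add: tmat_def polyT.tvar)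
  next
    case 2
    with assms \<open>i \<in> _\<close> \<open>j \<in> _\<close> show ?thesis by (simp add: tmat_def polyT_uminus polyT.tvar)
  next
    case 3
    then show ?thesis by (simp add: tmat_def polyT.const)
  qed
qed

lemma poly_matrix_mm: "poly_matrix A \<Longrightarrow> poly_matrix B \<Longrightarrow> poly_matrix (\<lambda>T. mm (A T) (B T))"
  unfolding poly_matrix_def mm_def sum_1_3 by (simp add: polyT.add polyT.mult)

lemma poly_matrix_mcomm: "poly_matrix A \<Longrightarrow> poly_matrix B \<Longrightarrow> poly_matrix (\<lambda>T. mcomm (A T) (B T))"
  using poly_matrix_mm[of A B] poly_matrix_mm[of B A]
  unfolding poly_matrix_def mcomm_def msub_def by (simp add: polyT_diff)

lemma mtr_mm_umat:
  "mtr (mm X (umat Z)) = (\<Sum>i = 1..3. \<Sum>j = i + 1..3. (X j i - X i j) * umat Z i j)"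
  unfolding sum_upper_triangle mtr_def mm_def sum_1_3 by (simp add: umat_def field_simps)

lemma mtr_mm_smat:
  "mtr (mm X (smat Z)) = (\<Sum>i = 1..3. \<Sum>j = i..3. (if i = j then X i i else X i j + X j i) * smat Z i j)"
  unfolding sum_upper_triangle_diag mtr_def mm_def sum_1_3 by (simp add: smat_def field_simps)

lemma in_C2I:
  assumes X: "poly_matrix X" and "SO3_invariant f" and f: "\<And>T Z. f T Z = mtr (mm (X T) (umat Z))"
  shows "in_C2 f"
  unfolding in_C2_def
proof (intro conjI exI allI)
  let ?p = "\<lambda>i j. if i \<in> {1..3} \<and> j \<in> {1..3} then (\<lambda>T. X T j i - X T i j) else (\<lambda>T. 0)"
  show "?p i j \<in> polyT" for i j
    using X unfolding poly_matrix_def by (auto intro: polyT_diff polyT.const)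
  show "f T Z = (\<Sum>i = 1..3. \<Sum>j = i + 1..3. ?p i j T * umat Z i j)" for T Z
    unfolding f mtr_mm_umat sum_upper_triangle by simp
qed fact

lemma in_C3I:
  assumes X: "poly_matrix X" and "SO3_invariant f" and f: "\<And>T Z. f T Z = mtr (mm (X T) (smat Z))"
  shows "in_C3 f"
  unfolding in_C3_def
proof (intro conjI exI allI)
  let ?p = "\<lambda>i j. if i \<in> {1..3} \<and> j \<in> {1..3} then (\<lambda>T. if i = j then X T i i else X T i j + X T j i)
    else (\<lambda>T. 0)"
  show "?p i j \<in> polyT" for i j
    using X unfolding poly_matrix_def by (cases "i = j") (auto intro: polyT.add polyT.const)
  show "f T Z = (\<Sum>i = 1..3. \<Sum>j = i..3. ?p i j T * smat Z i j)" for T Z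
    unfolding f mtr_mm_smat sum_upper_triangle_diag by simp
qed fact

lemma generates_W3_trace_t: "generates_W3 (trace_t 1 :: 'k::field_char_0 fn) (wt 1 0 0)"
  using lin.comb_delta[of 1 1] trace_t_nonzero multihom_trace_t trace_t_unipotent lin_comb_reaches_trace_t
  by (intro lin.generates_W3_comb[of "\<lambda>p. if p = 1 then 1 else 0"]) auto

lemma generates_W3_trace_tt_umat: "generates_W3 (trace_tt umat (1, 2) :: 'k::field_char_0 fn) (wt 1 1 0)"
  using bil.comb_delta[of "(1, 2)" umat 1] trace_tt_umat_nonzero multihom_trace_tt_umat
    trace_tt_umat_unipotent bil_umat_comb_reaches_trace_tt
  by (intro bil.generates_W3_comb[of _ "\<lambda>p. if p = (1, 2) then 1 else 0"]) auto

lemma generates_W3_trace_tt_smat: "generates_W3 (trace_tt smat (1, 1) :: 'k::field_char_0 fn) (wt 2 0 0)"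
  using bil.comb_delta[of "(1, 1)" smat 1] trace_tt_smat_nonzero multihom_trace_tt_smat
    trace_tt_smat_unipotent bil_smat_comb_reaches_trace_tt
  by (intro bil.generates_W3_comb[of _ "\<lambda>p. if p = (1, 1) then 1 else 0"]) auto

lemma generates_W3_tr_comm_s: "generates_W3 (tr_comm_s :: 'k::field_char_0 fn) (wt 2 1 0)"
proof (rule comm.generates_W3_comb)
  show "comm.comb (\<lambda>p. if p = (1, 1, 2) then 1 / 2 else 0) = tr_comm_s"
    using comm.comb_delta[of "(1, 1, 2)" "1 / 2"] by (simp add: fun_eq_iff tr_comm_s_eq)
qed (use tr_comm_s_nonzero multihom_tr_comm_s tr_comm_s_unipotent comm_comb_reaches_tr_comm_s in auto)

lemma in_C2_trace_t: "in_C2 (trace_t 1 :: 'k::field_char_0 fn)"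
  by (rule in_C2I[OF poly_matrix_tmat SO3_invariant_trace_t]) (simp_all add: trace_t_def)

lemma in_C2_trace_tt_umat: "in_C2 (trace_tt umat (1, 2) :: 'k::field_char_0 fn)"
  by (rule in_C2I[OF poly_matrix_mm[OF poly_matrix_tmat poly_matrix_tmat] SO3_invariant_trace_tt_umat])
    (simp_all add: trace_tt.simps)

lemma in_C3_trace_tt_smat: "in_C3 (trace_tt smat (1, 1) :: 'k::field_char_0 fn)"
  by (rule in_C3I[OF poly_matrix_mm[OF poly_matrix_tmat poly_matrix_tmat] SO3_invariant_trace_tt_smat])
    (simp_all add: trace_tt.simps)

lemma in_C3_tr_comm_s: "in_C3 (tr_comm_s :: 'k::field_char_0 fn)"
  by (rule in_C3I[OF poly_matrix_mcomm[OF poly_matrix_mm[OF poly_matrix_tmat poly_matrix_tmat]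
        poly_matrix_tmat] SO3_invariant_tr_comm_s])
    (simp_all add: tr_comm_s_def)

theorem proposition5p3:
  shows "in_C2 (\<lambda>T Z. mtr (mm (tmat T 1) (umat Z)) :: 'k::field_char_0)
       \<and> generates_W3 (\<lambda>T Z. mtr (mm (tmat T 1) (umat Z)) :: 'k) (wt 1 0 0)
       \<and> in_C2 (\<lambda>T Z. mtr (mm (mm (tmat T 1) (tmat T 2)) (umat Z)) :: 'k)
       \<and> generates_W3 (\<lambda>T Z. mtr (mm (mm (tmat T 1) (tmat T 2)) (umat Z)) :: 'k) (wt 1 1 0)
       \<and> in_C3 (\<lambda>T Z. mtr (mm (mm (tmat T 1) (tmat T 1)) (smat Z)) :: 'k)
       \<and> generates_W3 (\<lambda>T Z. mtr (mm (mm (tmat T 1) (tmat T 1)) (smat Z)) :: 'k) (wt 2 0 0)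
       \<and> in_C3 (\<lambda>T Z. mtr (mm (mcomm (mm (tmat T 1) (tmat T 1)) (tmat T 2)) (smat Z)) :: 'k)
       \<and> generates_W3 (\<lambda>T Z. mtr (mm (mcomm (mm (tmat T 1) (tmat T 1)) (tmat T 2)) (smat Z)) :: 'k) (wt 2 1 0)"
proof -
  have "trace_t 1 = (\<lambda>T Z. mtr (mm (tmat T 1) (umat Z)))"
    and "trace_tt umat (1, 2) = (\<lambda>T Z. mtr (mm (mm (tmat T 1) (tmat T 2)) (umat Z)))"
    and "trace_tt smat (1, 1) = (\<lambda>T Z. mtr (mm (mm (tmat T 1) (tmat T 1)) (smat Z)))"
    and "tr_comm_s = (\<lambda>T Z. mtr (mm (mcomm (mm (tmat T 1) (tmat T 1)) (tmat T 2)) (smat Z)))"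
    by (simp_all add: fun_eq_iff trace_t_def trace_tt.simps tr_comm_s_def)
  note eqs = this
  show ?thesis
    unfolding eqs[symmetric]
    by (intro conjI in_C2_trace_t generates_W3_trace_t in_C2_trace_tt_umat generates_W3_trace_tt_umat
        in_C3_trace_tt_smat generates_W3_trace_tt_smat in_C3_tr_comm_s generates_W3_tr_comm_s)
qed

end
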